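(* For every $r>0$ there is a constant $C_r$ depending only on $r$ such that for every finite connected undirected unweighted graph $G=(V,E)$ with $n$ vertices and every initial mutant set $S_0\subseteq V$, the expected absorption time of the $\lambda$-mixed Moran process with $\lambda=1/2$ and fitness $r$ started from $S_0$ is at most $C_r n^4$ (i.e., it is $O_r(n^4)$).
   Context: The $\lambda$-mixed Moran process on a connected graph $G=(V,E)$ with $n=|V|\ge 2$: each vertex hosts a resident (fitness $1$) or mutant (fitness $r>0$); the state is the mutant set $S_t\subseteq V$. Each step, independently: with probability $\lambda$ a Birth-death step (a vertex $u$ chosen with probability proportional to fitness among all vertices; a uniformly random neighbor of $u$ takes $u$'s type); with probability $1-\lambda$ a death-Birth step (a uniformly random vertex $v$ dies; a neighbor $u$ of $v$ chosen with probability proportional to fitness among the neighbors of $v$; $v$ takes $u$'s type). The absorption time is the expected number of steps until $S_t\in\{\emptyset,V\}$. *)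

theory Defs
  imports Complex_Main "HOL-Library.Extended_Nonnegative_Real"
begin

definition connected_graph :: "nat set \<Rightarrow> (nat \<Rightarrow> nat \<Rightarrow> bool) \<Rightarrow> bool" where
  "connected_graph V E \<longleftrightarrow> finite V \<and> V \<noteq> {}
     \<and> (\<forall>u v. E u v \<longrightarrow> u \<in> V \<and> v \<in> V)
     \<and> (\<forall>u v. E u v \<longrightarrow> E v u)
     \<and> (\<forall>u. \<not> E u u)
     \<and> (\<forall>u\<in>V. \<forall>v\<in>V. E\<^sup>*\<^sup>* u v)"

definition nbrs :: "nat set \<Rightarrow> (nat \<Rightarrow> nat \<Rightarrow> bool) \<Rightarrow> nat \<Rightarrow> nat set" where
  "nbrs V E u = {v \<in> V. E u v}"

definition fit :: "real \<Rightarrow> nat set \<Rightarrow> nat \<Rightarrow> real" where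
  "fit r S u = (if u \<in> S then r else 1)"

definition upd :: "nat set \<Rightarrow> nat \<Rightarrow> nat \<Rightarrow> nat set" where
  "upd S u v = (if u \<in> S then insert v S else S - {v})"

definition mixed_kernel ::
  "real \<Rightarrow> real \<Rightarrow> nat set \<Rightarrow> (nat \<Rightarrow> nat \<Rightarrow> bool) \<Rightarrow> nat set \<Rightarrow> nat set \<Rightarrow> real" where
  "mixed_kernel lam r V E S S' =
     lam * (\<Sum>u\<in>V. \<Sum>v\<in>nbrs V E u.
        (fit r S u / (\<Sum>w\<in>V. fit r S w)) * (1 / real (card (nbrs V E u)))
        * (if upd S u v = S' then 1 else 0))
   + (1 - lam) * (\<Sum>v\<in>V. \<Sum>u\<in>nbrs V E v.
        (1 / real (card V)) * (fit r S u / (\<Sum>w\<in>nbrs V E v. fit r S w))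
        * (if upd S u v = S' then 1 else 0))"

fun state_dist ::
  "real \<Rightarrow> real \<Rightarrow> nat set \<Rightarrow> (nat \<Rightarrow> nat \<Rightarrow> bool) \<Rightarrow> nat set \<Rightarrow> nat \<Rightarrow> nat set \<Rightarrow> real" where
  "state_dist lam r V E S0 0 S = (if S = S0 then 1 else 0)"
| "state_dist lam r V E S0 (Suc t) S' =
     (\<Sum>S\<in>Pow V. state_dist lam r V E S0 t S * mixed_kernel lam r V E S S')"

text \<open>Probability that the process is not yet absorbed after t steps (the absorbing
  states {} and V are absorbing for the chain, so this equals P(T > t)).\<close>
definition not_absorbed ::
  "real \<Rightarrow> real \<Rightarrow> nat set \<Rightarrow> (nat \<Rightarrow> nat \<Rightarrow> bool) \<Rightarrow> nat set \<Rightarrow> nat \<Rightarrow> real" where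
  "not_absorbed lam r V E S0 t = (\<Sum>S\<in>Pow V - {{}, V}. state_dist lam r V E S0 t S)"

text \<open>Expected absorption time E[T] = sum_{t>=0} P(T > t), in [0, infinity].\<close>
definition absorption_time ::
  "real \<Rightarrow> real \<Rightarrow> nat set \<Rightarrow> (nat \<Rightarrow> nat \<Rightarrow> bool) \<Rightarrow> nat set \<Rightarrow> ennreal" where
  "absorption_time lam r V E S0 = (\<Sum>t. ennreal (not_absorbed lam r V E S0 t))"

end

theory Submission
  imports Defs
begin

text \<open>Let \<open>n = |V|\<close> and let \<open>z(S)\<close> be n plus the number of vertices carrying the fitter type
  (the mutants if \<open>r \<ge> 1\<close>, the residents otherwise), so \<open>n \<le> z \<le> 2n\<close>. For \<open>\<lambda> = 1/2\<close> the
  probability that a step copies the type of u onto a neighbour v is, at neutral fitness, symmetric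
  in u and v; with fitness, copies from a fitter vertex only become likelier and copies from the other
  type only rarer, so z is a submartingale. In every non-absorbed state some edge between the two
  types fires with probability at least \<open>c\<^sub>r / n\<^sup>2\<close>, \<open>c\<^sub>r = min 1 r / (2 max 1 r)\<close>. Hence
  \<open>\<Phi>(S) = (n\<^sup>2 / c\<^sub>r) (4n\<^sup>2 - z(S)\<^sup>2)\<close>, which lies in \<open>[0, 4n\<^sup>4 / c\<^sub>r]\<close>, decreases in expectation
  by at least 1 per step before absorption, and the expected absorption time is at most
  \<open>\<Phi>(S\<^sub>0) \<le> 4n\<^sup>4 / c\<^sub>r\<close>.\<close>

lemma connected_graph_finite: "connected_graph V E \<Longrightarrow> finite V"
  by (simp add: connected_graph_def)

lemma connected_graph_edgeD: "connected_graph V E \<Longrightarrow> E u v \<Longrightarrow> u \<in> V \<and> v \<in> V"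
  by (simp add: connected_graph_def)

lemma connected_graph_sym: "connected_graph V E \<Longrightarrow> E u v \<longleftrightarrow> E v u"
  unfolding connected_graph_def by blast

lemma finite_nbrs: "finite V \<Longrightarrow> finite (nbrs V E u)"
  by (simp add: nbrs_def)

lemma sum_nbrs: "finite V \<Longrightarrow> (\<Sum>v\<in>nbrs V E u. g v) = (\<Sum>v\<in>V. if E u v then g v else 0)"
  by (simp add: nbrs_def sum.inter_filter)

lemma card_nbrs_le: "finite V \<Longrightarrow> card (nbrs V E u) \<le> card V"
  by (simp add: nbrs_def card_mono)

lemma connected_graph_exists_edge_out:
  assumes "connected_graph V E" "S \<subseteq> V" "S \<noteq> {}" "S \<noteq> V"
  obtains u v where "E u v" "u \<in> S" "v \<notin> S"
proof -
  obtain a b where ab: "a \<in> S" "b \<in> V" "b \<notin> S" using assms(2-4) by blast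
  then have "E\<^sup>*\<^sup>* a b" using assms(1,2) unfolding connected_graph_def by blast
  from this ab(1,3) show thesis
    by (induction rule: rtranclp_induct) (use that in auto)
qed

lemma card_nbrs_pos:
  assumes "connected_graph V E" "card V \<ge> 2" "u \<in> V"
  shows "card (nbrs V E u) > 0"
proof -
  have "V \<noteq> {u}" using assms(2) by auto
  then obtain v where v: "E u v"
    using connected_graph_exists_edge_out[OF assms(1), of "{u}"] assms(3) by auto
  then have "v \<in> nbrs V E u" using connected_graph_edgeD[OF assms(1) v] by (simp add: nbrs_def)
  then show ?thesis using finite_nbrs[OF connected_graph_finite[OF assms(1)]] card_gt_0_iff by blast
qed

lemma fit_bounds: "min 1 r \<le> fit r S w" "fit r S w \<le> max 1 r"
  by (auto simp: fit_def)

lemma fit_pos: "r > 0 \<Longrightarrow> 0 < fit r S w"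
  by (simp add: fit_def)

lemma sum_fit_bounds:
  assumes "finite A"
  shows "real (card A) * min 1 r \<le> (\<Sum>w\<in>A. fit r S w)" "(\<Sum>w\<in>A. fit r S w) \<le> real (card A) * max 1 r"
  using sum_mono[of A "\<lambda>_. min 1 r" "fit r S"] sum_mono[of A "fit r S" "\<lambda>_. max 1 r"]
  by (auto simp: fit_bounds)

lemma sum_fit_pos: "r > 0 \<Longrightarrow> finite A \<Longrightarrow> A \<noteq> {} \<Longrightarrow> 0 < (\<Sum>w\<in>A. fit r S w)"
  by (rule sum_pos) (simp_all add: fit_pos)

definition total_fitness :: "real \<Rightarrow> nat set \<Rightarrow> nat set \<Rightarrow> real" where
  "total_fitness r V S = (\<Sum>w\<in>V. fit r S w)"

definition nbr_fitness :: "real \<Rightarrow> nat set \<Rightarrow> (nat \<Rightarrow> nat \<Rightarrow> bool) \<Rightarrow> nat set \<Rightarrow> nat \<Rightarrow> real" where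
  "nbr_fitness r V E S v = (\<Sum>w\<in>nbrs V E v. fit r S w)"

lemma total_fitness_bounds:
  "finite V \<Longrightarrow> real (card V) * min 1 r \<le> total_fitness r V S"
  "finite V \<Longrightarrow> total_fitness r V S \<le> real (card V) * max 1 r"
  unfolding total_fitness_def by (simp_all add: sum_fit_bounds)

lemma nbr_fitness_bounds:
  "finite V \<Longrightarrow> real (card (nbrs V E v)) * min 1 r \<le> nbr_fitness r V E S v"
  "finite V \<Longrightarrow> nbr_fitness r V E S v \<le> real (card (nbrs V E v)) * max 1 r"
  unfolding nbr_fitness_def by (simp_all add: sum_fit_bounds finite_nbrs)

lemma total_fitness_pos: "connected_graph V E \<Longrightarrow> r > 0 \<Longrightarrow> 0 < total_fitness r V S"
  unfolding total_fitness_def by (rule sum_fit_pos) (simp_all add: connected_graph_def)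

lemma nbr_fitness_pos:
  assumes "connected_graph V E" "card V \<ge> 2" "r > 0" "v \<in> V"
  shows "0 < nbr_fitness r V E S v"
proof -
  have "nbrs V E v \<noteq> {}" using card_nbrs_pos[OF assms(1,2,4)] by auto
  then show ?thesis unfolding nbr_fitness_def
    by (intro sum_fit_pos[OF assms(3) finite_nbrs[OF connected_graph_finite[OF assms(1)]]])
qed

definition transfer_prob ::
  "real \<Rightarrow> real \<Rightarrow> nat set \<Rightarrow> (nat \<Rightarrow> nat \<Rightarrow> bool) \<Rightarrow> nat set \<Rightarrow> nat \<Rightarrow> nat \<Rightarrow> real" where
  "transfer_prob lam r V E S u v =
     lam * (fit r S u / total_fitness r V S) / real (card (nbrs V E u))
   + (1 - lam) * (fit r S u / nbr_fitness r V E S v) / real (card V)"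

lemma transfer_prob_nonneg:
  assumes "0 \<le> lam" "lam \<le> 1" "r > 0"
  shows "0 \<le> transfer_prob lam r V E S u v"
  using assms fit_pos[OF assms(3), THEN less_imp_le]
  unfolding transfer_prob_def total_fitness_def nbr_fitness_def
  by (intro add_nonneg_nonneg divide_nonneg_nonneg mult_nonneg_nonneg sum_nonneg) auto

definition step_mean ::
  "real \<Rightarrow> real \<Rightarrow> nat set \<Rightarrow> (nat \<Rightarrow> nat \<Rightarrow> bool) \<Rightarrow> nat set \<Rightarrow> (nat \<Rightarrow> nat \<Rightarrow> real) \<Rightarrow> real" where
  "step_mean lam r V E S g =
     (\<Sum>u\<in>V. \<Sum>v\<in>V. if E u v then transfer_prob lam r V E S u v * g u v else 0)"

lemma mixed_kernel_eq_transfer_prob: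
  assumes "connected_graph V E"
  shows "mixed_kernel lam r V E S S'
    = (\<Sum>u\<in>V. \<Sum>v\<in>V. if E u v \<and> upd S u v = S' then transfer_prob lam r V E S u v else 0)"
proof -
  have fin: "finite V" using connected_graph_finite[OF assms] .
  have Bd: "(\<Sum>u\<in>V. \<Sum>v\<in>nbrs V E u. g u v) = (\<Sum>u\<in>V. \<Sum>v\<in>V. if E u v then g u v else 0)"
    for g :: "nat \<Rightarrow> nat \<Rightarrow> real"
    by (simp add: sum_nbrs[OF fin])
  have dB: "(\<Sum>v\<in>V. \<Sum>u\<in>nbrs V E v. g u v) = (\<Sum>u\<in>V. \<Sum>v\<in>V. if E u v then g u v else 0)"
    for g :: "nat \<Rightarrow> nat \<Rightarrow> real"
    unfolding sum_nbrs[OF fin]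
    by (subst sum.swap) (simp add: connected_graph_sym[OF assms])
  show ?thesis
    unfolding mixed_kernel_def nbr_fitness_def[symmetric]
    unfolding total_fitness_def[symmetric]
    by (subst (2) dB, subst Bd, simp only: sum_distrib_left sum.distrib[symmetric])
      (intro sum.cong refl, simp add: transfer_prob_def)
qed

lemma sum_mixed_kernel_mult:
  assumes "connected_graph V E" "S \<subseteq> V"
  shows "(\<Sum>S'\<in>Pow V. mixed_kernel lam r V E S S' * h S') = step_mean lam r V E S (\<lambda>u v. h (upd S u v))"
proof -
  have delta: "(\<Sum>S'\<in>Pow V. (if E u v \<and> upd S u v = S' then transfer_prob lam r V E S u v else 0) * h S')
      = (if E u v then transfer_prob lam r V E S u v * h (upd S u v) else 0)" for u v
  proof -
    have "E u v \<Longrightarrow> upd S u v \<in> Pow V"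
      using connected_graph_edgeD[OF assms(1)] assms(2) by (auto simp: upd_def)
    then show ?thesis using connected_graph_finite[OF assms(1)]
      by (auto simp: if_distrib[of "\<lambda>x. x * _"] cong: if_cong)
  qed
  have "(\<Sum>S'\<in>Pow V. mixed_kernel lam r V E S S' * h S')
      = (\<Sum>S'\<in>Pow V. \<Sum>u\<in>V. \<Sum>v\<in>V.
           (if E u v \<and> upd S u v = S' then transfer_prob lam r V E S u v else 0) * h S')"
    by (simp add: mixed_kernel_eq_transfer_prob[OF assms(1)] sum_distrib_right)
  also have "\<dots> = (\<Sum>u\<in>V. \<Sum>v\<in>V. \<Sum>S'\<in>Pow V.
           (if E u v \<and> upd S u v = S' then transfer_prob lam r V E S u v else 0) * h S')"
    by (subst sum.swap) (intro sum.cong refl sum.swap)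
  finally show ?thesis by (simp add: delta step_mean_def)
qed

lemma step_mean_add:
  "step_mean lam r V E S (\<lambda>u v. f u v + g u v) = step_mean lam r V E S f + step_mean lam r V E S g"
  by (simp add: step_mean_def distrib_left sum.distrib[symmetric] if_distrib cong: if_cong)

lemma step_mean_cmult:
  "step_mean lam r V E S (\<lambda>u v. c * f u v) = c * step_mean lam r V E S f"
  by (simp add: step_mean_def sum_distrib_left if_distrib mult.left_commute cong: if_cong)

lemma step_mean_mono:
  assumes "0 \<le> lam" "lam \<le> 1" "r > 0" "\<And>u v. E u v \<Longrightarrow> f u v \<le> g u v"
  shows "step_mean lam r V E S f \<le> step_mean lam r V E S g"
  unfolding step_mean_def
  by (intro sum_mono) (auto intro: mult_left_mono assms(4) transfer_prob_nonneg[OF assms(1-3)])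

lemma step_mean_nonneg:
  assumes "0 \<le> lam" "lam \<le> 1" "r > 0" "\<And>u v. E u v \<Longrightarrow> 0 \<le> g u v"
  shows "0 \<le> step_mean lam r V E S g"
  unfolding step_mean_def using assms(4) transfer_prob_nonneg[OF assms(1-3)] by (intro sum_nonneg) simp

lemma transfer_prob_mult_le_step_mean:
  assumes "0 \<le> lam" "lam \<le> 1" "r > 0" "connected_graph V E" "E u0 v0"
    and nonneg: "\<And>u v. E u v \<Longrightarrow> 0 \<le> g u v"
  shows "transfer_prob lam r V E S u0 v0 * g u0 v0 \<le> step_mean lam r V E S g"
proof -
  let ?t = "\<lambda>u v. if E u v then transfer_prob lam r V E S u v * g u v else 0"
  have fin: "finite V" and uv: "u0 \<in> V" "v0 \<in> V"
    using assms(4,5) connected_graph_finite connected_graph_edgeD by blast+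
  have t_nonneg: "0 \<le> ?t u v" for u v
    using transfer_prob_nonneg[OF assms(1-3)] nonneg by simp
  have "transfer_prob lam r V E S u0 v0 * g u0 v0 = ?t u0 v0" using assms(5) by simp
  also have "\<dots> \<le> (\<Sum>v\<in>V. ?t u0 v)"
    by (rule member_le_sum) (use uv fin t_nonneg in auto)
  also have "\<dots> \<le> (\<Sum>u\<in>V. \<Sum>v\<in>V. ?t u v)"
    by (rule member_le_sum[where f = "\<lambda>u. \<Sum>v\<in>V. ?t u v"]) (use uv fin t_nonneg in \<open>auto intro: sum_nonneg\<close>)
  finally show ?thesis unfolding step_mean_def .
qed

lemma step_mean_const:
  assumes "connected_graph V E" "card V \<ge> 2" "r > 0"
  shows "step_mean lam r V E S (\<lambda>_ _. c) = c"
proof -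
  have fin: "finite V" using connected_graph_finite[OF assms(1)] .
  define Bd where "Bd u = fit r S u / total_fitness r V S / real (card (nbrs V E u))" for u
  define dB where "dB u v = fit r S u / nbr_fitness r V E S v / real (card V)" for u v
  have sum_Bd: "(\<Sum>u\<in>V. \<Sum>v\<in>V. if E u v then Bd u else 0) = 1"
  proof -
    have "(\<Sum>v\<in>V. if E u v then Bd u else 0) = fit r S u / total_fitness r V S" if "u \<in> V" for u
    proof -
      have "(\<Sum>v\<in>V. if E u v then Bd u else 0) = real (card (nbrs V E u)) * Bd u"
        unfolding sum_nbrs[OF fin, where E = E and u = u, symmetric] by simp
      then show ?thesis using card_nbrs_pos[OF assms(1,2) that] by (simp add: Bd_def)
    qed
    then show ?thesis using total_fitness_pos[OF assms(1,3), of S]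
      by (simp add: sum_divide_distrib[symmetric] total_fitness_def)
  qed
  have sum_dB: "(\<Sum>u\<in>V. \<Sum>v\<in>V. if E u v then dB u v else 0) = 1"
  proof -
    have "(\<Sum>u\<in>V. if E u v then dB u v else 0) = 1 / real (card V)" if "v \<in> V" for v
    proof -
      have "(\<Sum>u\<in>V. if E u v then fit r S u else 0) = nbr_fitness r V E S v"
        unfolding nbr_fitness_def sum_nbrs[OF fin]
        by (rule sum.cong[OF refl]) (metis connected_graph_sym[OF assms(1)])
      moreover have "(\<Sum>u\<in>V. if E u v then dB u v else 0)
          = (\<Sum>u\<in>V. if E u v then fit r S u else 0) / nbr_fitness r V E S v / real (card V)"
        unfolding sum_divide_distrib by (rule sum.cong) (auto simp: dB_def)
      ultimately show ?thesis using nbr_fitness_pos[OF assms that, of S] by simp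
    qed
    then show ?thesis using assms(2) by (subst sum.swap) simp
  qed
  have "transfer_prob lam r V E S u v = lam * Bd u + (1 - lam) * dB u v" for u v
    by (simp add: transfer_prob_def Bd_def dB_def)
  then have "step_mean lam r V E S (\<lambda>_ _. 1)
      = lam * (\<Sum>u\<in>V. \<Sum>v\<in>V. if E u v then Bd u else 0)
      + (1 - lam) * (\<Sum>u\<in>V. \<Sum>v\<in>V. if E u v then dB u v else 0)"
    unfolding step_mean_def sum_distrib_left sum.distrib[symmetric] by (intro sum.cong refl) auto
  then show ?thesis using step_mean_cmult[of lam r V E S c "\<lambda>_ _. 1"] sum_Bd sum_dB by simp
qed

section \<open>Absorption time bounded by a Lyapunov function\<close>

lemma mixed_kernel_nonneg:
  assumes "0 \<le> lam" "lam \<le> 1" "r > 0"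
  shows "0 \<le> mixed_kernel lam r V E S S'"
  unfolding mixed_kernel_def using assms fit_pos[OF assms(3), THEN less_imp_le]
  by (intro add_nonneg_nonneg mult_nonneg_nonneg sum_nonneg divide_nonneg_nonneg) auto

lemma state_dist_nonneg:
  assumes "0 \<le> lam" "lam \<le> 1" "r > 0"
  shows "0 \<le> state_dist lam r V E S0 t S"
  by (induction t arbitrary: S) (auto intro!: sum_nonneg mult_nonneg_nonneg mixed_kernel_nonneg[OF assms])

lemma not_absorbed_nonneg:
  "0 \<le> lam \<Longrightarrow> lam \<le> 1 \<Longrightarrow> r > 0 \<Longrightarrow> 0 \<le> not_absorbed lam r V E S0 t"
  unfolding not_absorbed_def by (intro sum_nonneg state_dist_nonneg)

text \<open>The Lyapunov argument: \<open>\<Sum>\<^sub>S P(S\<^sub>t = S) f(S)\<close> decreases at least by \<open>P(T > t)\<close> in step t.\<close>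
lemma sum_not_absorbed_le:
  assumes "0 \<le> lam" "lam \<le> 1" "r > 0" "finite V" "S0 \<subseteq> V"
    and nonneg: "\<And>S. S \<subseteq> V \<Longrightarrow> 0 \<le> f S"
    and drift: "\<And>S. S \<subseteq> V \<Longrightarrow> (\<Sum>S'\<in>Pow V. mixed_kernel lam r V E S S' * f S')
                 \<le> f S - (if S = {} \<or> S = V then 0 else 1)"
  shows "(\<Sum>t<N. not_absorbed lam r V E S0 t) \<le> f S0"
proof -
  let ?p = "state_dist lam r V E S0"
  define P where "P t = (\<Sum>S\<in>Pow V. ?p t S * f S)" for t
  have fin: "finite (Pow V)" using assms(4) by simp
  have not_absorbed: "not_absorbed lam r V E S0 t = (\<Sum>S\<in>Pow V. ?p t S * (if S = {} \<or> S = V then 0 else 1))"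
    for t
  proof -
    have "not_absorbed lam r V E S0 t = (\<Sum>S\<in>{S \<in> Pow V. \<not> (S = {} \<or> S = V)}. ?p t S)"
      unfolding not_absorbed_def by (rule sum.cong) auto
    also have "\<dots> = (\<Sum>S\<in>Pow V. ?p t S * (if S = {} \<or> S = V then 0 else 1))"
      unfolding sum.inter_filter[OF fin] by (rule sum.cong) auto
    finally show ?thesis .
  qed
  have step: "P (Suc t) + not_absorbed lam r V E S0 t \<le> P t" for t
  proof -
    have "P (Suc t) = (\<Sum>S\<in>Pow V. ?p t S * (\<Sum>S'\<in>Pow V. mixed_kernel lam r V E S S' * f S'))"
      unfolding P_def state_dist.simps sum_distrib_left sum_distrib_right mult.assoc by (rule sum.swap)
    also have "\<dots> \<le> (\<Sum>S\<in>Pow V. ?p t S * (f S - (if S = {} \<or> S = V then 0 else 1)))"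
      using drift state_dist_nonneg[OF assms(1-3)] by (intro sum_mono mult_left_mono) auto
    also have "\<dots> = P t - not_absorbed lam r V E S0 t"
      unfolding P_def not_absorbed by (simp add: right_diff_distrib sum_subtractf)
    finally show ?thesis by linarith
  qed
  have "P N + (\<Sum>t<N. not_absorbed lam r V E S0 t) \<le> P 0"
  proof (induction N)
    case (Suc N)
    then show ?case using step[of N] by simp
  qed simp
  moreover have "P 0 = f S0" using assms(5) fin by (simp add: P_def if_distrib[of "\<lambda>x. x * _"] cong: if_cong)
  moreover have "0 \<le> P N"
    unfolding P_def using nonneg state_dist_nonneg[OF assms(1-3)] by (intro sum_nonneg mult_nonneg_nonneg) auto
  ultimately show ?thesis by linarith
qed

lemma absorption_time_le:
  assumes "0 \<le> lam" "lam \<le> 1" "r > 0" and partial: "\<And>N. (\<Sum>t<N. not_absorbed lam r V E S0 t) \<le> B"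
  shows "absorption_time lam r V E S0 \<le> ennreal B"
proof -
  let ?a = "not_absorbed lam r V E S0"
  have nonneg: "0 \<le> ?a t" for t using not_absorbed_nonneg[OF assms(1-3)] .
  have "summable ?a"
  proof (rule bounded_imp_summable[OF nonneg])
    show "(\<Sum>k\<le>n. ?a k) \<le> B" for n using partial[of "Suc n"] unfolding lessThan_Suc_atMost .
  qed
  then have "absorption_time lam r V E S0 = ennreal (\<Sum>t. ?a t)"
    unfolding absorption_time_def by (rule suminf_ennreal2[OF nonneg])
  also have "\<dots> \<le> ennreal B"
    using suminf_le_const[OF \<open>summable ?a\<close> partial] by (rule ennreal_leI)
  finally show ?thesis .
qed

section \<open>The fitter type gains in expectation\<close>

definition size_change :: "nat set \<Rightarrow> nat \<Rightarrow> nat \<Rightarrow> real" where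
  "size_change S u v = (if u \<in> S \<and> v \<notin> S then 1 else if u \<notin> S \<and> v \<in> S then -1 else 0)"

lemma card_upd:
  assumes "finite S"
  shows "real (card (upd S u v)) = real (card S) + size_change S u v"
proof (cases "u \<notin> S \<and> v \<in> S")
  case True
  then have "card S > 0" using assms card_gt_0_iff by blast
  then show ?thesis using True assms by (simp add: upd_def size_change_def)
qed (use assms in \<open>auto simp: upd_def size_change_def card_insert_if\<close>)

lemma size_change_swap: "size_change S v u = - size_change S u v"
  by (simp add: size_change_def)

definition fitter_sign :: "real \<Rightarrow> real" where
  "fitter_sign r = (if 1 \<le> r then 1 else -1)"

lemma fit_eq_max_if_gain: "0 < fitter_sign r * size_change S u v \<Longrightarrow> fit r S u = max 1 r"
  by (auto simp: fitter_sign_def size_change_def fit_def split: if_splits)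

lemma fit_eq_min_if_loss: "fitter_sign r * size_change S u v < 0 \<Longrightarrow> fit r S u = min 1 r"
  by (auto simp: fitter_sign_def size_change_def fit_def split: if_splits)

text \<open>The transfer probability at \<open>\<lambda> = 1/2\<close> and \<open>r = 1\<close>; unlike at other \<open>\<lambda>\<close>, it is symmetric in u and v.\<close>
definition neutral_prob :: "nat set \<Rightarrow> (nat \<Rightarrow> nat \<Rightarrow> bool) \<Rightarrow> nat \<Rightarrow> nat \<Rightarrow> real" where
  "neutral_prob V E u v =
     1/2 * (1 / real (card V)) / real (card (nbrs V E u))
   + 1/2 * (1 / real (card (nbrs V E v))) / real (card V)"

lemma neutral_prob_le_transfer_prob:
  assumes "connected_graph V E" "card V \<ge> 2" "r > 0" "E u v" and fit_u: "fit r S u = max 1 r"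
  shows "neutral_prob V E u v \<le> transfer_prob (1/2) r V E S u v"
proof -
  have fin: "finite V" and v: "v \<in> V" using assms connected_graph_finite connected_graph_edgeD by blast+
  have "1 / real (card V) \<le> fit r S u / total_fitness r V S"
    using total_fitness_bounds(2)[OF fin, of r S] total_fitness_pos[OF assms(1,3), of S] assms(2)
    by (simp add: field_simps fit_u)
  moreover have "1 / real (card (nbrs V E v)) \<le> fit r S u / nbr_fitness r V E S v"
    using nbr_fitness_bounds(2)[OF fin, where E = E and v = v and r = r and S = S]
      nbr_fitness_pos[OF assms(1-3) v, of S] card_nbrs_pos[OF assms(1,2) v]
    by (simp add: field_simps fit_u)
  ultimately show ?thesis
    unfolding neutral_prob_def transfer_prob_def
    by (intro add_mono divide_right_mono mult_left_mono) auto
qed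

lemma transfer_prob_le_neutral_prob:
  assumes "connected_graph V E" "card V \<ge> 2" "r > 0" "E u v" and fit_u: "fit r S u = min 1 r"
  shows "transfer_prob (1/2) r V E S u v \<le> neutral_prob V E u v"
proof -
  have fin: "finite V" and v: "v \<in> V" using assms connected_graph_finite connected_graph_edgeD by blast+
  have "fit r S u / total_fitness r V S \<le> 1 / real (card V)"
    using total_fitness_bounds(1)[OF fin, of r S] total_fitness_pos[OF assms(1,3), of S] assms(2)
    by (simp add: field_simps fit_u)
  moreover have "fit r S u / nbr_fitness r V E S v \<le> 1 / real (card (nbrs V E v))"
    using nbr_fitness_bounds(1)[OF fin, where E = E and v = v and r = r and S = S]
      nbr_fitness_pos[OF assms(1-3) v, of S] card_nbrs_pos[OF assms(1,2) v]
    by (simp add: field_simps fit_u)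
  ultimately show ?thesis
    unfolding neutral_prob_def transfer_prob_def
    by (intro add_mono divide_right_mono mult_left_mono) auto
qed

lemma sum_sum_antisym_eq_0:
  fixes g :: "'a \<Rightarrow> 'a \<Rightarrow> real"
  assumes "\<And>u v. g u v = - g v u"
  shows "(\<Sum>u\<in>V. \<Sum>v\<in>V. g u v) = 0"
proof -
  have "(\<Sum>u\<in>V. \<Sum>v\<in>V. g u v) = (\<Sum>v\<in>V. \<Sum>u\<in>V. - g v u)"
    by (subst sum.swap) (simp add: assms[symmetric])
  then show ?thesis by (simp add: sum_negf)
qed

lemma step_mean_fitter_gain_nonneg:
  assumes "connected_graph V E" "card V \<ge> 2" "r > 0"
  shows "0 \<le> step_mean (1/2) r V E S (\<lambda>u v. fitter_sign r * size_change S u v)"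
proof -
  let ?gain = "\<lambda>u v. fitter_sign r * size_change S u v"
  have "0 = (\<Sum>u\<in>V. \<Sum>v\<in>V. if E u v then neutral_prob V E u v * ?gain u v else 0)"
  proof (rule sym, rule sum_sum_antisym_eq_0)
    fix u v
    have "E v u \<longleftrightarrow> E u v" using connected_graph_sym[OF assms(1)] .
    moreover have "neutral_prob V E v u = neutral_prob V E u v" by (simp add: neutral_prob_def algebra_simps)
    ultimately show "(if E u v then neutral_prob V E u v * ?gain u v else 0)
        = - (if E v u then neutral_prob V E v u * ?gain v u else 0)"
      by (simp add: size_change_swap[where u = u and v = v])
  qed
  also have "\<dots> \<le> step_mean (1/2) r V E S ?gain"
  proof -
    have "neutral_prob V E u v * ?gain u v \<le> transfer_prob (1/2) r V E S u v * ?gain u v"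
      if "E u v" for u v
    proof (cases "?gain u v" "0 :: real" rule: linorder_cases)
      case less
      then show ?thesis using transfer_prob_le_neutral_prob[OF assms that fit_eq_min_if_loss[OF less]]
        by (intro mult_right_mono_neg) auto
    next
      case equal
      then show ?thesis by auto
    next
      case greater
      then show ?thesis using neutral_prob_le_transfer_prob[OF assms that fit_eq_max_if_gain[OF greater]]
        by (intro mult_right_mono) auto
    qed
    then show ?thesis unfolding step_mean_def by (intro sum_mono) auto
  qed
  finally show ?thesis .
qed

section \<open>The potential\<close>

definition transfer_floor :: "real \<Rightarrow> real" where
  "transfer_floor r = min 1 r / (2 * max 1 r)"

lemma transfer_floor_pos: "r > 0 \<Longrightarrow> 0 < transfer_floor r"
  by (simp add: transfer_floor_def)

lemma transfer_floor_le_transfer_prob: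
  assumes "connected_graph V E" "card V \<ge> 2" "r > 0" "E u v"
  shows "transfer_floor r / real (card V) ^ 2 \<le> transfer_prob (1/2) r V E S u v"
proof -
  have fin: "finite V" and u: "u \<in> V" and v: "v \<in> V"
    using assms connected_graph_finite connected_graph_edgeD by blast+
  have fit_u: "min 1 r \<le> fit r S u" "0 \<le> fit r S u"
    using fit_bounds(1) fit_pos[OF assms(3), THEN less_imp_le] by blast+
  have F: "0 < total_fitness r V S" "total_fitness r V S \<le> real (card V) * max 1 r"
    using total_fitness_pos[OF assms(1,3)] total_fitness_bounds(2)[OF fin] by blast+
  have "min 1 r / (real (card V) * max 1 r) \<le> fit r S u / total_fitness r V S"
    by (rule frac_le) (use fit_u F in simp_all)
  then have "1/2 * (min 1 r / (real (card V) * max 1 r)) / real (card V)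
      \<le> 1/2 * (fit r S u / total_fitness r V S) / real (card (nbrs V E u))"
    using card_nbrs_pos[OF assms(1,2) u] card_nbrs_le[OF fin, of E u] fit_u F
    by (intro frac_le mult_left_mono) simp_all
  moreover have "0 \<le> (1 - 1/2) * (fit r S u / nbr_fitness r V E S v) / real (card V)"
    using fit_u nbr_fitness_pos[OF assms(1-3) v, of S] by simp
  moreover have "transfer_floor r / real (card V) ^ 2
      = 1/2 * (min 1 r / (real (card V) * max 1 r)) / real (card V)"
    by (simp add: transfer_floor_def power2_eq_square ac_simps)
  ultimately show ?thesis unfolding transfer_prob_def by linarith
qed

lemma step_mean_size_change_sq_ge:
  assumes "connected_graph V E" "card V \<ge> 2" "r > 0" "S \<subseteq> V" "S \<noteq> {}" "S \<noteq> V"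
  shows "transfer_floor r / real (card V) ^ 2 \<le> step_mean (1/2) r V E S (\<lambda>u v. (size_change S u v)\<^sup>2)"
proof -
  obtain u v where uv: "E u v" "u \<in> S" "v \<notin> S"
    using connected_graph_exists_edge_out[OF assms(1,4-6)] .
  have "transfer_floor r / real (card V) ^ 2 \<le> transfer_prob (1/2) r V E S u v"
    by (rule transfer_floor_le_transfer_prob[OF assms(1-3) uv(1)])
  also have "\<dots> = transfer_prob (1/2) r V E S u v * (size_change S u v)\<^sup>2"
    using uv by (simp add: size_change_def)
  also have "\<dots> \<le> step_mean (1/2) r V E S (\<lambda>u v. (size_change S u v)\<^sup>2)"
    by (rule transfer_prob_mult_le_step_mean) (use assms uv in auto)
  finally show ?thesis .
qed

definition level :: "real \<Rightarrow> nat set \<Rightarrow> nat set \<Rightarrow> real" where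
  "level r V S = (if 1 \<le> r then real (card V) + real (card S) else 2 * real (card V) - real (card S))"

lemma level_upd: "finite S \<Longrightarrow> level r V (upd S u v) = level r V S + fitter_sign r * size_change S u v"
  by (simp add: level_def fitter_sign_def card_upd)

lemma level_nonneg: "finite V \<Longrightarrow> S \<subseteq> V \<Longrightarrow> 0 \<le> level r V S"
  using card_mono[of V S] by (simp add: level_def)

lemma level_le: "finite V \<Longrightarrow> S \<subseteq> V \<Longrightarrow> level r V S \<le> 2 * real (card V)"
  using card_mono[of V S] by (simp add: level_def)

definition potential :: "real \<Rightarrow> nat set \<Rightarrow> nat set \<Rightarrow> real" where
  "potential r V S = real (card V) ^ 2 / transfer_floor r * (4 * real (card V) ^ 2 - (level r V S)\<^sup>2)"

lemma potential_upd:
  assumes "finite S"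
  shows "potential r V (upd S u v) = potential r V S
    - real (card V) ^ 2 / transfer_floor r
      * (2 * level r V S * (fitter_sign r * size_change S u v) + (size_change S u v)\<^sup>2)"
proof -
  have "(fitter_sign r)\<^sup>2 = 1" by (simp add: fitter_sign_def)
  then have "(level r V S + fitter_sign r * size_change S u v)\<^sup>2
      = (level r V S)\<^sup>2 + 2 * level r V S * (fitter_sign r * size_change S u v) + (size_change S u v)\<^sup>2"
    by (simp add: power2_eq_square algebra_simps)
  then show ?thesis unfolding potential_def level_upd[OF assms] by (simp add: algebra_simps)
qed

lemma potential_nonneg:
  assumes "finite V" "S \<subseteq> V" "r > 0"
  shows "0 \<le> potential r V S"
proof -
  have "(level r V S)\<^sup>2 \<le> (2 * real (card V))\<^sup>2"
    using level_nonneg[OF assms(1,2)] level_le[OF assms(1,2)] by (intro power_mono)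
  then show ?thesis
    unfolding potential_def using transfer_floor_pos[OF assms(3)] by simp
qed

lemma potential_le:
  assumes "r > 0"
  shows "potential r V S \<le> 4 / transfer_floor r * real (card V) ^ 4"
proof -
  have "potential r V S \<le> real (card V) ^ 2 / transfer_floor r * (4 * real (card V) ^ 2)"
    unfolding potential_def using transfer_floor_pos[OF assms] by (intro mult_left_mono) simp_all
  also have "\<dots> = 4 / transfer_floor r * real (card V) ^ 4"
    by (simp add: power_numeral_reduce)
  finally show ?thesis .
qed

lemma sum_mixed_kernel_mult_potential:
  assumes "connected_graph V E" "card V \<ge> 2" "r > 0" "S \<subseteq> V"
  shows "(\<Sum>S'\<in>Pow V. mixed_kernel (1/2) r V E S S' * potential r V S')
    = potential r V S - real (card V) ^ 2 / transfer_floor r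
      * (2 * level r V S * step_mean (1/2) r V E S (\<lambda>u v. fitter_sign r * size_change S u v)
         + step_mean (1/2) r V E S (\<lambda>u v. (size_change S u v)\<^sup>2))"
proof -
  let ?a = "real (card V) ^ 2 / transfer_floor r"
  let ?gain = "\<lambda>u v. fitter_sign r * size_change S u v"
  let ?sq = "\<lambda>u v. (size_change S u v)\<^sup>2"
  have "finite S" using finite_subset[OF assms(4) connected_graph_finite[OF assms(1)]] .
  then have upd: "(\<lambda>u v. potential r V (upd S u v))
      = (\<lambda>u v. potential r V S + (- 2 * ?a * level r V S) * ?gain u v + (- ?a) * ?sq u v)"
    by (simp add: fun_eq_iff potential_upd algebra_simps)
  show ?thesis
    unfolding sum_mixed_kernel_mult[OF assms(1,4)] upd
    by (simp only: step_mean_add step_mean_cmult step_mean_const[OF assms(1-3)]) (simp add: algebra_simps)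
qed

lemma potential_drift:
  assumes "connected_graph V E" "card V \<ge> 2" "r > 0" "S \<subseteq> V"
  shows "(\<Sum>S'\<in>Pow V. mixed_kernel (1/2) r V E S S' * potential r V S')
    \<le> potential r V S - (if S = {} \<or> S = V then 0 else 1)"
proof -
  let ?a = "real (card V) ^ 2 / transfer_floor r"
  let ?gain = "step_mean (1/2) r V E S (\<lambda>u v. fitter_sign r * size_change S u v)"
  let ?sq = "step_mean (1/2) r V E S (\<lambda>u v. (size_change S u v)\<^sup>2)"
  have a_pos: "0 < ?a" using transfer_floor_pos[OF assms(3)] assms(2) by simp
  have gain_nonneg: "0 \<le> 2 * level r V S * ?gain"
    using level_nonneg[OF connected_graph_finite[OF assms(1)] assms(4), of r]
      step_mean_fitter_gain_nonneg[OF assms(1-3), of S] by simp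
  have "(if S = {} \<or> S = V then 0 else 1) \<le> ?a * ?sq"
  proof (cases "S = {} \<or> S = V")
    case True
    have "0 \<le> ?a * ?sq"
      using a_pos assms(3) by (intro mult_nonneg_nonneg step_mean_nonneg) simp_all
    then show ?thesis using True by simp
  next
    case False
    have "1 = ?a * (transfer_floor r / real (card V) ^ 2)"
      using transfer_floor_pos[OF assms(3)] assms(2) by simp
    also have "\<dots> \<le> ?a * ?sq"
      using step_mean_size_change_sq_ge[OF assms] False a_pos by (intro mult_left_mono) auto
    finally show ?thesis using False by simp
  qed
  moreover have "0 \<le> ?a * (2 * level r V S * ?gain)"
    by (rule mult_nonneg_nonneg) (use a_pos gain_nonneg in simp_all)
  ultimately show ?thesis
    unfolding sum_mixed_kernel_mult_potential[OF assms] distrib_left by linarith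
qed

theorem mainTheorem5:
  fixes r :: real
  assumes "r > 0"
  shows "\<exists>C::real. \<forall>(V::nat set) E S0.
           connected_graph V E \<and> card V \<ge> 2 \<and> S0 \<subseteq> V \<longrightarrow>
           absorption_time (1/2) r V E S0 \<le> ennreal (C * real (card V) ^ 4)"
proof (intro exI allI impI)
  fix V :: "nat set" and E S0
  assume "connected_graph V E \<and> card V \<ge> 2 \<and> S0 \<subseteq> V"
  then have G: "connected_graph V E" "card V \<ge> 2" and S0: "S0 \<subseteq> V" by auto
  have fin: "finite V" using connected_graph_finite[OF G(1)] .
  have "absorption_time (1/2) r V E S0 \<le> ennreal (potential r V S0)"
  proof (rule absorption_time_le)
    show "(\<Sum>t<N. not_absorbed (1/2) r V E S0 t) \<le> potential r V S0" for N
      by (rule sum_not_absorbed_le[OF _ _ assms fin S0 potential_nonneg[OF fin _ assms]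
            potential_drift[OF G assms]]) simp_all
  qed (use assms in simp_all)
  also have "\<dots> \<le> ennreal (4 / transfer_floor r * real (card V) ^ 4)"
    using potential_le[OF assms] by (rule ennreal_leI)
  finally show "absorption_time (1/2) r V E S0 \<le> ennreal (4 / transfer_floor r * real (card V) ^ 4)" .
qed

end
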